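(* Let $(\mathfrak g,\mathfrak g^* )$ be a Hom-Lie bialgebra (with $\mathfrak g$ finite-dimensional, Hom-Lie algebras $(\mathfrak{g},[\cdot,\cdot]_{\mathfrak{g}},\phi_{\mathfrak{g}})$ and $(\mathfrak g^*,[\cdot,\cdot]_{\mathfrak g^*},\phi_{\mathfrak g}^* )$ and cobracket $\Delta$). Then the canonical structure on $\mathfrak g\oplus\mathfrak g^*$ described below is a Hom-Lie bialgebra, and the maps $\mathfrak g\to\mathfrak g\oplus\mathfrak g^*$, $x\mapsto\phi_{\mathfrak g}(x)$, and $\mathfrak g^*\to\mathfrak g\oplus\mathfrak g^*$, $a\mapsto\phi_{\mathfrak g}^*(a)$, are homomorphisms of Hom-Lie bialgebras from $(\mathfrak g,\Delta)$ and from $(\mathfrak g^*,-\Delta_{\mathfrak g^*})$ respectively, where $\langle\Delta_{\mathfrak g^*}(a),x\otimes y\rangle=\langle a,[x,y]_{\mathfrak g}\rangle$.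
   Context: A Hom-Lie algebra $(\mathfrak{h},[\cdot,\cdot]_{\mathfrak{h}},\phi_{\mathfrak{h}})$: skew-symmetric bilinear bracket and linear map $\phi_{\mathfrak h}$ with $\phi_{\mathfrak h}[x,y]=[\phi_{\mathfrak h}x,\phi_{\mathfrak h}y]$ and $[\phi_{\mathfrak h}(x),[y,z]]+[\phi_{\mathfrak h}(y),[z,x]]+[\phi_{\mathfrak h}(z),[x,y]]=0$; weakly involutive if $[\phi_{\mathfrak h}^2(x),y]=[x,y]$. For $z\in\mathfrak h$, $t\in\mathfrak h\otimes\mathfrak h$: $\mathrm{ad}_zt=(\mathrm{ad}_z\otimes\phi_{\mathfrak h}+\phi_{\mathfrak h}\otimes\mathrm{ad}_z)t$, $\mathrm{ad}_zy=[z,y]$. A Hom-Lie bialgebra $(\mathfrak h,\Delta_{\mathfrak h})$ (finite-dimensional) is a weakly involutive Hom-Lie algebra $\mathfrak h$ with a linear map $\Delta_{\mathfrak h}:\mathfrak h\to\mathfrak h\otimes\mathfrak h$ such that $\mathfrak h^*$ with bracket $\langle[a,b]_{\mathfrak h^*},x\rangle=\langle\Delta_{\mathfrak h}(x),a\otimes b\rangle$ and map $\phi_{\mathfrak h}^*$ is a weakly involutive Hom-Lie algebra and $\Delta_{\mathfrak h}[x,y]=\mathrm{ad}_{\phi_{\mathfrak h}(x)}\Delta_{\mathfrak h}(y)-\mathrm{ad}_{\phi_{\mathfrak h}(y)}\Delta_{\mathfrak h}(x)$; we also write $(\mathfrak h,\mathfrak h^* )$. A homomorphism of Hom-Lie bialgebras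 $f:(\mathfrak h,\Delta_{\mathfrak h})\to(\mathfrak k,\Delta_{\mathfrak k})$ is a linear map with $f[x,y]=[f(x),f(y)]$, $f\phi_{\mathfrak h}=\phi_{\mathfrak k}f$ and $(f\otimes f)\Delta_{\mathfrak h}=\Delta_{\mathfrak k}f$. Canonical structure: let $\mathrm{ad}^\circ_xa\in\mathfrak g^*$ be defined by $\langle\mathrm{ad}^\circ_xa,y\rangle=-\langle a,[\phi_{\mathfrak g}(x),y]_{\mathfrak g}\rangle$ and $\mathfrak{ad}^\circ_ax\in\mathfrak g$ by $\langle\mathfrak{ad}^\circ_ax,b\rangle=-\langle x,[\phi_{\mathfrak g}^*(a),b]_{\mathfrak g^*}\rangle$. On $\mathfrak g\oplus\mathfrak g^*$ take the bracket $[x+a,y+b]_d=[x,y]_{\mathfrak g}+\mathrm{ad}^\circ_xb-\mathrm{ad}^\circ_ya+[a,b]_{\mathfrak g^*}+\mathfrak{ad}^\circ_ay-\mathfrak{ad}^\circ_bx$ and twisting map $\phi_{\mathfrak g}\oplus\phi_{\mathfrak g}^*$; with $\{e_i\}$ a basis of $\mathfrak g$, $\{f_i\}$ the dual basis and $r=\sum_ie_i\otimes f_i$, the cobracket is $\Delta_{\mathcal{HD}}(u)=(\mathrm{ad}_u\otimes(\phi_{\mathfrak g}\oplus\phi_{\mathfrak g}^* )+(\phi_{\mathfrak g}\oplus\phi_{\mathfrak g}^* )\otimes\mathrm{ad}_u)r$ for $u\in\mathfrak g\oplus\mathfrak g^*$ (ad taken in the bracket $[\cdot,\cdot]_d$).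 *)

theory Defs
  imports Main
begin

text \<open>A finite-dimensional vector space over a field 'k is modelled as the coordinate
space of functions 'i \<Rightarrow> 'k for a finite index type 'i (the basis e_i = unitv i).
Tensors in h \<otimes> h are modelled as 'i \<Rightarrow> 'i \<Rightarrow> 'k, with u \<otimes> v = (\<lambda>i j. u i * v j).
The dual space h* is again 'i \<Rightarrow> 'k with the coordinate pairing (dual basis f_i = unitv i).\<close>

definition lin :: "(('i \<Rightarrow> 'k::field) \<Rightarrow> ('j \<Rightarrow> 'k)) \<Rightarrow> bool" where
  "lin f \<longleftrightarrow> (\<forall>x y. f (\<lambda>i. x i + y i) = (\<lambda>j. f x j + f y j)) \<and>
               (\<forall>c x. f (\<lambda>i. c * x i) = (\<lambda>j. c * f x j))"

definition lin2 :: "(('i \<Rightarrow> 'k::field) \<Rightarrow> ('j \<Rightarrow> 'j \<Rightarrow> 'k)) \<Rightarrow> bool" where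
  "lin2 f \<longleftrightarrow> (\<forall>x y. f (\<lambda>i. x i + y i) = (\<lambda>p q. f x p q + f y p q)) \<and>
               (\<forall>c x. f (\<lambda>i. c * x i) = (\<lambda>p q. c * f x p q))"

definition bilin :: "(('i \<Rightarrow> 'k::field) \<Rightarrow> ('i \<Rightarrow> 'k) \<Rightarrow> ('i \<Rightarrow> 'k)) \<Rightarrow> bool" where
  "bilin br \<longleftrightarrow> (\<forall>x. lin (br x)) \<and> (\<forall>y. lin (\<lambda>x. br x y))"

definition unitv :: "'i \<Rightarrow> ('i \<Rightarrow> 'k::field)" where
  "unitv p = (\<lambda>k. if k = p then 1 else 0)"

definition pair :: "('i::finite \<Rightarrow> 'k::field) \<Rightarrow> ('i \<Rightarrow> 'k) \<Rightarrow> 'k" where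
  "pair a x = (\<Sum>i\<in>UNIV. a i * x i)"

definition tmap :: "(('i::finite \<Rightarrow> 'k::field) \<Rightarrow> ('j \<Rightarrow> 'k)) \<Rightarrow> (('i \<Rightarrow> 'k) \<Rightarrow> ('j \<Rightarrow> 'k))
     \<Rightarrow> ('i \<Rightarrow> 'i \<Rightarrow> 'k) \<Rightarrow> ('j \<Rightarrow> 'j \<Rightarrow> 'k)" where
  "tmap f g t = (\<lambda>i j. \<Sum>p\<in>UNIV. \<Sum>q\<in>UNIV. t p q * f (unitv p) i * g (unitv q) j)"

definition ad_t :: "(('i::finite \<Rightarrow> 'k::field) \<Rightarrow> ('i \<Rightarrow> 'k) \<Rightarrow> ('i \<Rightarrow> 'k)) \<Rightarrow> (('i \<Rightarrow> 'k) \<Rightarrow> ('i \<Rightarrow> 'k))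
     \<Rightarrow> ('i \<Rightarrow> 'k) \<Rightarrow> ('i \<Rightarrow> 'i \<Rightarrow> 'k) \<Rightarrow> ('i \<Rightarrow> 'i \<Rightarrow> 'k)" where
  "ad_t br phi z t = (\<lambda>i j. tmap (br z) phi t i j + tmap phi (br z) t i j)"

definition dual_map :: "(('i::finite \<Rightarrow> 'k::field) \<Rightarrow> ('i \<Rightarrow> 'k)) \<Rightarrow> ('i \<Rightarrow> 'k) \<Rightarrow> ('i \<Rightarrow> 'k)" where
  "dual_map phi a = (\<lambda>i. pair a (phi (unitv i)))"

text \<open>bracket on h*: \<langle>[a,b], x\<rangle> = \<langle>\<Delta> x, a \<otimes> b\<rangle>\<close>
definition dual_br :: "(('i::finite \<Rightarrow> 'k::field) \<Rightarrow> ('i \<Rightarrow> 'i \<Rightarrow> 'k))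
     \<Rightarrow> ('i \<Rightarrow> 'k) \<Rightarrow> ('i \<Rightarrow> 'k) \<Rightarrow> ('i \<Rightarrow> 'k)" where
  "dual_br D a b = (\<lambda>k. \<Sum>i\<in>UNIV. \<Sum>j\<in>UNIV. D (unitv k) i j * a i * b j)"

definition dual_cobr :: "(('i::finite \<Rightarrow> 'k::field) \<Rightarrow> ('i \<Rightarrow> 'k) \<Rightarrow> ('i \<Rightarrow> 'k))
     \<Rightarrow> ('i \<Rightarrow> 'k) \<Rightarrow> ('i \<Rightarrow> 'i \<Rightarrow> 'k)" where
  "dual_cobr br a = (\<lambda>i j. pair a (br (unitv i) (unitv j)))"

definition hom_lie :: "(('i \<Rightarrow> 'k::field) \<Rightarrow> ('i \<Rightarrow> 'k) \<Rightarrow> ('i \<Rightarrow> 'k)) \<Rightarrow> (('i \<Rightarrow> 'k) \<Rightarrow> ('i \<Rightarrow> 'k)) \<Rightarrow> bool" where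
  "hom_lie br phi \<longleftrightarrow> bilin br \<and> (\<forall>x y. br x y = (\<lambda>i. - br y x i)) \<and> lin phi \<and>
     (\<forall>x y. phi (br x y) = br (phi x) (phi y)) \<and>
     (\<forall>x y z. (\<lambda>i. br (phi x) (br y z) i + br (phi y) (br z x) i + br (phi z) (br x y) i) = (\<lambda>i. 0))"

definition weak_inv :: "(('i \<Rightarrow> 'k::field) \<Rightarrow> ('i \<Rightarrow> 'k) \<Rightarrow> ('i \<Rightarrow> 'k)) \<Rightarrow> (('i \<Rightarrow> 'k) \<Rightarrow> ('i \<Rightarrow> 'k)) \<Rightarrow> bool" where
  "weak_inv br phi \<longleftrightarrow> (\<forall>x y. br (phi (phi x)) y = br x y)"

definition hom_lie_bialg :: "(('i::finite \<Rightarrow> 'k::field) \<Rightarrow> ('i \<Rightarrow> 'k) \<Rightarrow> ('i \<Rightarrow> 'k)) \<Rightarrow> (('i \<Rightarrow> 'k) \<Rightarrow> ('i \<Rightarrow> 'k))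
     \<Rightarrow> (('i \<Rightarrow> 'k) \<Rightarrow> ('i \<Rightarrow> 'i \<Rightarrow> 'k)) \<Rightarrow> bool" where
  "hom_lie_bialg br phi D \<longleftrightarrow> hom_lie br phi \<and> weak_inv br phi \<and> lin2 D \<and>
     hom_lie (dual_br D) (dual_map phi) \<and> weak_inv (dual_br D) (dual_map phi) \<and>
     (\<forall>x y. D (br x y) = (\<lambda>i j. ad_t br phi (phi x) (D y) i j - ad_t br phi (phi y) (D x) i j))"

definition bialg_hom :: "(('i::finite \<Rightarrow> 'k::field) \<Rightarrow> ('i \<Rightarrow> 'k) \<Rightarrow> ('i \<Rightarrow> 'k)) \<Rightarrow> (('i \<Rightarrow> 'k) \<Rightarrow> ('i \<Rightarrow> 'k))
     \<Rightarrow> (('i \<Rightarrow> 'k) \<Rightarrow> ('i \<Rightarrow> 'i \<Rightarrow> 'k))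
     \<Rightarrow> (('j::finite \<Rightarrow> 'k) \<Rightarrow> ('j \<Rightarrow> 'k) \<Rightarrow> ('j \<Rightarrow> 'k)) \<Rightarrow> (('j \<Rightarrow> 'k) \<Rightarrow> ('j \<Rightarrow> 'k))
     \<Rightarrow> (('j \<Rightarrow> 'k) \<Rightarrow> ('j \<Rightarrow> 'j \<Rightarrow> 'k)) \<Rightarrow> (('i \<Rightarrow> 'k) \<Rightarrow> ('j \<Rightarrow> 'k)) \<Rightarrow> bool" where
  "bialg_hom br1 phi1 D1 br2 phi2 D2 f \<longleftrightarrow> lin f \<and>
     (\<forall>x y. f (br1 x y) = br2 (f x) (f y)) \<and> (\<forall>x. f (phi1 x) = phi2 (f x)) \<and>
     (\<forall>x. tmap f f (D1 x) = D2 (f x))"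

subsection \<open>The double g \<oplus> g*, indexed by 'i + 'i (Inl: g-part, Inr: g*-part)\<close>

definition gpart :: "('i + 'i \<Rightarrow> 'k) \<Rightarrow> ('i \<Rightarrow> 'k)" where "gpart u = (\<lambda>i. u (Inl i))"
definition dpart :: "('i + 'i \<Rightarrow> 'k) \<Rightarrow> ('i \<Rightarrow> 'k)" where "dpart u = (\<lambda>i. u (Inr i))"
definition mkd :: "('i \<Rightarrow> 'k) \<Rightarrow> ('i \<Rightarrow> 'k) \<Rightarrow> ('i + 'i \<Rightarrow> 'k)" where
  "mkd x a = (\<lambda>s. case s of Inl i \<Rightarrow> x i | Inr i \<Rightarrow> a i)"

definition coad :: "(('i::finite \<Rightarrow> 'k::field) \<Rightarrow> ('i \<Rightarrow> 'k) \<Rightarrow> ('i \<Rightarrow> 'k)) \<Rightarrow> (('i \<Rightarrow> 'k) \<Rightarrow> ('i \<Rightarrow> 'k))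
     \<Rightarrow> ('i \<Rightarrow> 'k) \<Rightarrow> ('i \<Rightarrow> 'k) \<Rightarrow> ('i \<Rightarrow> 'k)" where
  "coad br phi x a = (\<lambda>j. - pair a (br (phi x) (unitv j)))"

definition dbr :: "(('i::finite \<Rightarrow> 'k::field) \<Rightarrow> ('i \<Rightarrow> 'k) \<Rightarrow> ('i \<Rightarrow> 'k)) \<Rightarrow> (('i \<Rightarrow> 'k) \<Rightarrow> ('i \<Rightarrow> 'k))
     \<Rightarrow> (('i \<Rightarrow> 'k) \<Rightarrow> ('i \<Rightarrow> 'i \<Rightarrow> 'k))
     \<Rightarrow> ('i + 'i \<Rightarrow> 'k) \<Rightarrow> ('i + 'i \<Rightarrow> 'k) \<Rightarrow> ('i + 'i \<Rightarrow> 'k)" where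
  "dbr br phi D u v =
     (let x = gpart u; a = dpart u; y = gpart v; b = dpart v;
          brs = dual_br D; phis = dual_map phi in
      mkd (\<lambda>i. br x y i + coad brs phis a y i - coad brs phis b x i)
          (\<lambda>i. coad br phi x b i - coad br phi y a i + brs a b i))"

definition dphi :: "(('i::finite \<Rightarrow> 'k::field) \<Rightarrow> ('i \<Rightarrow> 'k)) \<Rightarrow> ('i + 'i \<Rightarrow> 'k) \<Rightarrow> ('i + 'i \<Rightarrow> 'k)" where
  "dphi phi u = mkd (phi (gpart u)) (dual_map phi (dpart u))"

text \<open>r = \<Sum>_i e_i \<otimes> f_i\<close>
definition rcan :: "'i + 'i \<Rightarrow> 'i + 'i \<Rightarrow> 'k::field" where
  "rcan s t = (case (s, t) of (Inl i, Inr j) \<Rightarrow> (if i = j then 1 else 0) | _ \<Rightarrow> 0)"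

definition dcobr :: "(('i::finite \<Rightarrow> 'k::field) \<Rightarrow> ('i \<Rightarrow> 'k) \<Rightarrow> ('i \<Rightarrow> 'k)) \<Rightarrow> (('i \<Rightarrow> 'k) \<Rightarrow> ('i \<Rightarrow> 'k))
     \<Rightarrow> (('i \<Rightarrow> 'k) \<Rightarrow> ('i \<Rightarrow> 'i \<Rightarrow> 'k))
     \<Rightarrow> ('i + 'i \<Rightarrow> 'k) \<Rightarrow> ('i + 'i \<Rightarrow> 'i + 'i \<Rightarrow> 'k)" where
  "dcobr br phi D u = ad_t (dbr br phi D) (dphi phi) u rcan"

definition inj_g :: "(('i \<Rightarrow> 'k::field) \<Rightarrow> ('i \<Rightarrow> 'k)) \<Rightarrow> ('i \<Rightarrow> 'k) \<Rightarrow> ('i + 'i \<Rightarrow> 'k)" where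
  "inj_g phi x = mkd (phi x) (\<lambda>i. 0)"

definition inj_d :: "(('i::finite \<Rightarrow> 'k::field) \<Rightarrow> ('i \<Rightarrow> 'k)) \<Rightarrow> ('i \<Rightarrow> 'k) \<Rightarrow> ('i + 'i \<Rightarrow> 'k)" where
  "inj_d phi a = mkd (\<lambda>i. 0) (dual_map phi a)"

end

theory Submission
  imports Defs
begin

text \<open>The double bracket satisfies the Hom-Jacobi identity: by trilinearity and cyclicity of the
Jacobiator it suffices to test triples of pure elements of \<open>\<g>\<close> and \<open>\<g>\<^sup>*\<close>; the pure triples are the
Hom-Jacobi identities of \<open>\<g>\<close> and \<open>\<g>\<^sup>*\<close>, and after pairing with a test vector the mixed ones become
the compatibility condition of \<open>\<Delta>\<close>.
The cobracket of the double is the coboundary of \<open>r\<close>, so its cocycle condition follows from the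
Hom-Jacobi identity of the double together with
\<open>(\<phi>\<otimes>\<phi>) r = (\<phi>\<^sup>2\<otimes>1) r = (1\<otimes>\<phi>\<^sup>2) r\<close>. Computing it blockwise gives \<open>\<Delta>\<close> on \<open>\<g>\<close> and \<open>-\<Delta>\<^sub>\<g>\<^sub>*\<close> on \<open>\<g>\<^sup>*\<close>:
hence the dual of the double is the direct sum of \<open>\<g>\<^sup>*\<close> and \<open>(\<g>, -[\<cdot>,\<cdot>])\<close>, a weakly involutive
Hom-Lie algebra, and both twisted inclusions are bialgebra homomorphisms.\<close>

section \<open>Coordinate linear algebra\<close>

lemma sum_mult_unitv [simp]:
  fixes f :: "'i::finite \<Rightarrow> 'k::field"
  shows "(\<Sum>i\<in>UNIV. f i * unitv i l) = f l" "(\<Sum>i\<in>UNIV. unitv i l * f i) = f l"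
    "(\<Sum>i\<in>UNIV. f i * unitv l i) = f l" "(\<Sum>i\<in>UNIV. unitv l i * f i) = f l"
  by (simp_all add: unitv_def if_distrib[of "\<lambda>z. _ * z"] if_distrib[of "\<lambda>z. z * _"] cong: if_cong)

lemma sum_swap_inner:
  "(\<Sum>i\<in>A. \<Sum>j\<in>B. \<Sum>p\<in>C. F i j p) = (\<Sum>i\<in>A. \<Sum>p\<in>C. \<Sum>j\<in>B. F i j p)"
  by (rule sum.cong[OF refl], rule sum.swap)

lemma sum_swap_pairs:
  "(\<Sum>i\<in>A. \<Sum>j\<in>B. \<Sum>p\<in>C. \<Sum>q\<in>E. F i j p q) = (\<Sum>p\<in>C. \<Sum>q\<in>E. \<Sum>i\<in>A. \<Sum>j\<in>B. F i j p q)"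
proof -
  have "(\<Sum>i\<in>A. \<Sum>j\<in>B. \<Sum>p\<in>C. \<Sum>q\<in>E. F i j p q) = (\<Sum>i\<in>A. \<Sum>p\<in>C. \<Sum>j\<in>B. \<Sum>q\<in>E. F i j p q)"
    by (rule sum_swap_inner)
  also have "\<dots> = (\<Sum>i\<in>A. \<Sum>p\<in>C. \<Sum>q\<in>E. \<Sum>j\<in>B. F i j p q)"
    by (rule sum.cong[OF refl], rule sum_swap_inner)
  also have "\<dots> = (\<Sum>p\<in>C. \<Sum>i\<in>A. \<Sum>q\<in>E. \<Sum>j\<in>B. F i j p q)"
    by (rule sum.swap)
  also have "\<dots> = (\<Sum>p\<in>C. \<Sum>q\<in>E. \<Sum>i\<in>A. \<Sum>j\<in>B. F i j p q)"
    by (rule sum.cong[OF refl], rule sum.swap)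
  finally show ?thesis .
qed

lemma sum_UNIV_Plus:
  "(\<Sum>s\<in>(UNIV::('a::finite + 'b::finite) set). g s) = (\<Sum>i\<in>UNIV. g (Inl i)) + (\<Sum>i\<in>UNIV. g (Inr i))"
  using sum.Plus[of "UNIV::'a set" "UNIV::'b set" g] by (simp add: o_def)

lemma pair_unitv_left [simp]: "pair (unitv k) x = x k"
  and pair_unitv_right [simp]: "pair x (unitv k) = x k"
  by (simp_all add: pair_def)

lemma pair_commute: "pair a x = pair x a"
  by (simp add: pair_def mult.commute)

lemma pair_zero_left [simp]: "pair (\<lambda>i. 0) z = 0"
  and pair_zero_right [simp]: "pair z (\<lambda>i. 0) = 0"
  by (simp_all add: pair_def)

lemma pair_add_left: "pair (\<lambda>i. x i + y i) z = pair x z + pair y z"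
  and pair_add_right: "pair z (\<lambda>i. x i + y i) = pair z x + pair z y"
  and pair_diff_left: "pair (\<lambda>i. x i - y i) z = pair x z - pair y z"
  and pair_diff_right: "pair z (\<lambda>i. x i - y i) = pair z x - pair z y"
  and pair_uminus_left: "pair (\<lambda>i. - x i) z = - pair x z"
  and pair_uminus_right: "pair z (\<lambda>i. - x i) = - pair z x"
  and pair_scale_left: "pair (\<lambda>i. c * x i) z = c * pair x z"
  and pair_scale_right: "pair z (\<lambda>i. c * x i) = c * pair z x"
  by (simp_all add: pair_def sum.distrib sum_subtractf sum_negf sum_distrib_left algebra_simps)

lemmas pair_linear = pair_add_left pair_add_right pair_diff_left pair_diff_right
  pair_uminus_left pair_uminus_right pair_scale_left pair_scale_right

lemma pair_eqI: "(\<And>t. pair v t = pair w t) \<Longrightarrow> v = w"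
  by (rule ext) (metis pair_unitv_right)

lemma lin_add: "lin f \<Longrightarrow> f (\<lambda>i. x i + y i) = (\<lambda>j. f x j + f y j)"
  and lin_scale: "lin f \<Longrightarrow> f (\<lambda>i. c * x i) = (\<lambda>j. c * f x j)"
  by (simp_all add: lin_def)

lemma lin_zero: "lin f \<Longrightarrow> f (\<lambda>i. 0) = (\<lambda>j. 0)"
  using lin_scale[of f 0 "\<lambda>i. 0"] by simp

lemma lin_uminus: "lin f \<Longrightarrow> f (\<lambda>i. - x i) = (\<lambda>j. - f x j)"
  using lin_scale[of f "-1" x] by simp

lemma lin_diff: "lin f \<Longrightarrow> f (\<lambda>i. x i - y i) = (\<lambda>j. f x j - f y j)"
  using lin_add[of f x "\<lambda>i. - y i"] lin_uminus[of f y] by simp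

lemma lin_sum:
  assumes "lin f" "finite A"
  shows "f (\<lambda>k. \<Sum>p\<in>A. c p * v p k) = (\<lambda>j. \<Sum>p\<in>A. c p * f (v p) j)"
  using assms(2)
proof (induction A rule: finite_induct)
  case empty
  then show ?case using lin_zero[OF assms(1)] by simp
next
  case (insert a A)
  then show ?case
    using lin_add[OF assms(1), of "\<lambda>k. c a * v a k"] lin_scale[OF assms(1)] by simp
qed

lemma lin_expansion:
  assumes "lin (f::('i::finite \<Rightarrow> 'k::field) \<Rightarrow> _)"
  shows "f x j = (\<Sum>i\<in>UNIV. x i * f (unitv i) j)"
proof -
  have "f x = f (\<lambda>k. \<Sum>i\<in>UNIV. x i * unitv i k)"
    by simp
  then show ?thesis
    using lin_sum[OF assms finite_UNIV, of x unitv] by simp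
qed

lemma bilin_lin_left: "bilin br \<Longrightarrow> lin (\<lambda>x. br x y)"
  and bilin_lin_right: "bilin br \<Longrightarrow> lin (br x)"
  by (simp_all add: bilin_def)

lemma bilin_expansion:
  assumes "bilin (br::('i::finite \<Rightarrow> 'k::field) \<Rightarrow> _)"
  shows "br x y k = (\<Sum>i\<in>UNIV. \<Sum>j\<in>UNIV. x i * y j * br (unitv i) (unitv j) k)"
proof -
  have "br x y k = (\<Sum>i\<in>UNIV. x i * br (unitv i) y k)"
    using lin_expansion[OF bilin_lin_left[OF assms]] .
  also have "\<dots> = (\<Sum>i\<in>UNIV. x i * (\<Sum>j\<in>UNIV. y j * br (unitv i) (unitv j) k))"
    by (simp only: lin_expansion[OF bilin_lin_right[OF assms], of _ y])
  finally show ?thesis by (simp add: sum_distrib_left mult_ac)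
qed

lemma dual_map_unitv [simp]: "dual_map f (unitv k) i = f (unitv i) k"
  by (simp add: dual_map_def)

lemma lin_dual_map: "lin (dual_map f)"
  by (simp add: lin_def dual_map_def pair_linear)

lemma pair_dual_map: "lin f \<Longrightarrow> pair a (f x) = pair (dual_map f a) x"
  unfolding pair_def dual_map_def
  by (simp add: lin_expansion[of f x] sum_distrib_left sum_distrib_right mult_ac, subst sum.swap, simp)

lemma dual_map_dual_map: "lin f \<Longrightarrow> dual_map (dual_map f) = f"
  by (intro ext) (simp add: dual_map_def pair_def lin_expansion[symmetric])

lemma dual_map_column:
  "lin (f::('i::finite \<Rightarrow> 'k::field) \<Rightarrow> _) \<Longrightarrow> dual_map h (\<lambda>p. f (unitv p) i) = (\<lambda>p. f (h (unitv p)) i)"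
  by (rule ext) (simp add: dual_map_def pair_def lin_expansion[of f "h (unitv _)" i] mult.commute)

definition tpair :: "('i::finite \<Rightarrow> 'i \<Rightarrow> 'k::field) \<Rightarrow> ('i \<Rightarrow> 'k) \<Rightarrow> ('i \<Rightarrow> 'k) \<Rightarrow> 'k" where
  "tpair t a b = (\<Sum>i\<in>UNIV. \<Sum>j\<in>UNIV. t i j * a i * b j)"

lemma tpair_tmap: "tpair (tmap f g t) a b = tpair t (dual_map f a) (dual_map g b)"
proof -
  have "tpair (tmap f g t) a b = (\<Sum>i\<in>UNIV. \<Sum>j\<in>UNIV. \<Sum>p\<in>UNIV. \<Sum>q\<in>UNIV.
      t p q * f (unitv p) i * g (unitv q) j * a i * b j)"
    by (simp add: tpair_def tmap_def sum_distrib_right)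
  also have "\<dots> = (\<Sum>p\<in>UNIV. \<Sum>q\<in>UNIV. \<Sum>i\<in>UNIV. \<Sum>j\<in>UNIV.
      t p q * f (unitv p) i * g (unitv q) j * a i * b j)"
    by (rule sum_swap_pairs)
  also have "\<dots> = tpair t (dual_map f a) (dual_map g b)"
    by (simp add: tpair_def dual_map_def pair_def sum_distrib_left sum_distrib_right mult_ac)
  finally show ?thesis .
qed

lemma tmap_as_tpair: "tmap f g t s s' = tpair t (\<lambda>p. f (unitv p) s) (\<lambda>q. g (unitv q) s')"
  by (simp add: tmap_def tpair_def mult_ac)

lemma tpair_unitv: "tpair t (unitv k) (unitv l) = t k l"
  by (simp add: tpair_def unitv_def if_distrib[of "\<lambda>z. _ * z"] cong: if_cong)

lemma tpair_add: "tpair (\<lambda>i j. s i j + t i j) a b = tpair s a b + tpair t a b"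
  and tpair_diff: "tpair (\<lambda>i j. s i j - t i j) a b = tpair s a b - tpair t a b"
  and tpair_uminus: "tpair (\<lambda>i j. - t i j) a b = - tpair t a b"
  and tpair_uminus_left: "tpair t (\<lambda>i. - a i) b = - tpair t a b"
  and tpair_uminus_right: "tpair t a (\<lambda>i. - b i) = - tpair t a b"
  and tpair_zero_left: "tpair t (\<lambda>i. 0) b = 0"
  and tpair_zero_right: "tpair t a (\<lambda>i. 0) = 0"
  by (simp_all add: tpair_def algebra_simps sum.distrib sum_subtractf sum_negf)

lemma tpair_ad_t:
  "tpair (ad_t br phi z t) a b
     = tpair t (dual_map (br z) a) (dual_map phi b) + tpair t (dual_map phi a) (dual_map (br z) b)"
  by (simp add: ad_t_def tpair_add tpair_tmap)

lemma tmap_comp: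
  fixes f g h k :: "('i::finite \<Rightarrow> 'k::field) \<Rightarrow> ('i \<Rightarrow> 'k)"
  assumes "lin f" "lin g"
  shows "tmap f g (tmap h k t) = tmap (\<lambda>v. f (h v)) (\<lambda>v. g (k v)) t"
proof (intro ext)
  fix a b
  have "tmap f g (tmap h k t) a b = tpair t (dual_map h (\<lambda>p. f (unitv p) a)) (dual_map k (\<lambda>q. g (unitv q) b))"
    by (simp only: tmap_as_tpair tpair_tmap)
  also have "\<dots> = tmap (\<lambda>v. f (h v)) (\<lambda>v. g (k v)) t a b"
    by (simp only: dual_map_column[OF assms(1)] dual_map_column[OF assms(2)] tmap_as_tpair)
  finally show "tmap f g (tmap h k t) a b = tmap (\<lambda>v. f (h v)) (\<lambda>v. g (k v)) t a b" .
qed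

lemma tmap_add_tensor: "tmap f g (\<lambda>i j. s i j + t i j) = (\<lambda>a b. tmap f g s a b + tmap f g t a b)"
  and tmap_diff_left: "tmap (\<lambda>v i. f v i - f' v i) g t = (\<lambda>a b. tmap f g t a b - tmap f' g t a b)"
  and tmap_diff_right: "tmap g (\<lambda>v i. f v i - f' v i) t = (\<lambda>a b. tmap g f t a b - tmap g f' t a b)"
  by (intro ext; simp add: tmap_def sum.distrib sum_subtractf algebra_simps)+

lemma lin2_expansion:
  assumes "lin2 (D::('i::finite \<Rightarrow> 'k::field) \<Rightarrow> _)"
  shows "D x p q = (\<Sum>i\<in>UNIV. x i * D (unitv i) p q)"
proof -
  have "lin (\<lambda>x pq. D x (fst pq) (snd pq))"
    using assms by (simp add: lin_def lin2_def)
  from lin_expansion[OF this, of x "(p, q)"] show ?thesis by simp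
qed

lemma lin2_zero:
  assumes "lin2 D"
  shows "D (\<lambda>i. 0) p q = 0"
proof -
  have "D (\<lambda>i. 0 * x i) = (\<lambda>p q. 0 * D x p q)" for x
    using assms unfolding lin2_def by blast
  then show ?thesis by simp
qed

lemma pair_dual_br: "lin2 D \<Longrightarrow> pair (dual_br D a b) x = tpair (D x) a b"
  apply (simp add: pair_def dual_br_def tpair_def lin2_expansion[of D x] sum_distrib_left sum_distrib_right)
  apply (rule trans[OF sum.swap])
  apply (rule trans[OF sum_swap_inner])
  apply (simp add: mult_ac)
  done

lemma tpair_dual_cobr: "bilin br \<Longrightarrow> tpair (dual_cobr br a) x y = pair a (br x y)"
  apply (simp add: tpair_def dual_cobr_def pair_def bilin_expansion[of br x y]
      sum_distrib_left sum_distrib_right mult_ac)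
  apply (rule trans[OF sum_swap_inner])
  apply (rule trans[OF sum.swap])
  apply (simp add: mult_ac)
  done

section \<open>Weakly involutive Hom-Lie algebras\<close>

locale wi_hom_lie =
  fixes br :: "('i::finite \<Rightarrow> 'k::field) \<Rightarrow> ('i \<Rightarrow> 'k) \<Rightarrow> ('i \<Rightarrow> 'k)"
    and phi :: "('i \<Rightarrow> 'k) \<Rightarrow> ('i \<Rightarrow> 'k)"
  assumes hom_lie: "hom_lie br phi" and weak_inv: "weak_inv br phi"
begin

lemma bilin: "bilin br"
  and skew: "br x y = (\<lambda>i. - br y x i)"
  and lin_phi: "lin phi"
  and phi_br: "phi (br x y) = br (phi x) (phi y)"
  using hom_lie unfolding hom_lie_def by blast+

lemma lin_left: "lin (\<lambda>x. br x y)"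
  and lin_right: "lin (br x)"
  using bilin by (simp_all add: bilin_def)

lemma hom_jacobi: "br (phi x) (br y z) i + br (phi y) (br z x) i + br (phi z) (br x y) i = 0"
  using hom_lie unfolding hom_lie_def by (metis (mono_tags))

lemma br_phi_phi_left [simp]: "br (phi (phi x)) y = br x y"
  using weak_inv unfolding weak_inv_def by blast

lemma br_phi_phi_right [simp]: "br x (phi (phi y)) = br x y"
  using skew[of x "phi (phi y)"] skew[of y x] by simp

lemma phi_zero [simp]: "phi (\<lambda>i. 0) = (\<lambda>i. 0)"
  and br_zero_left [simp]: "br (\<lambda>i. 0) y = (\<lambda>i. 0)"
  and br_zero_right [simp]: "br x (\<lambda>i. 0) = (\<lambda>i. 0)"
  using lin_zero[OF lin_phi] lin_zero[OF lin_left] lin_zero[OF lin_right] by simp_all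

lemma pair_dual_phi: "pair (dual_map phi a) x = pair a (phi x)"
  using pair_dual_map[OF lin_phi] by simp

lemma coad_eq_dual_map: "coad br phi x a = (\<lambda>j. - dual_map (br (phi x)) a j)"
  by (simp add: coad_def dual_map_def)

lemma dual_map_br_phi: "dual_map (br (phi x)) a = (\<lambda>j. - coad br phi x a j)"
  by (simp add: coad_eq_dual_map)

lemma pair_coad_left: "pair (coad br phi x a) y = - pair a (br (phi x) y)"
  and pair_coad_right: "pair y (coad br phi x a) = - pair a (br (phi x) y)"
  by (simp_all add: coad_eq_dual_map pair_uminus_left pair_dual_map[OF lin_right] pair_commute[of y])

lemma pair_coad_phi: "pair (coad br phi (phi x) a) y = - pair a (br x y)"
  by (simp add: pair_coad_left)

lemma lin_coad: "lin (coad br phi x)"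
  using lin_dual_map[of "br (phi x)"] by (simp add: coad_eq_dual_map lin_def)

lemma lin_coad_left: "lin (\<lambda>x. coad br phi x a)"
proof -
  have "lin (\<lambda>x. br (phi x) y)" for y
    using lin_left lin_phi by (simp add: lin_def)
  then show ?thesis
    by (simp add: lin_def coad_def pair_linear)
qed

lemma coad_zero [simp]: "coad br phi x (\<lambda>i. 0) = (\<lambda>i. 0)"
  and coad_zero_left [simp]: "coad br phi (\<lambda>i. 0) a = (\<lambda>i. 0)"
  by (simp_all add: coad_def)

lemma coad_phi_phi [simp]: "coad br phi (phi (phi x)) a = coad br phi x a"
  by (simp add: coad_def)

lemma dual_phi_coad: "dual_map phi (coad br phi x b) = coad br phi (phi x) (dual_map phi b)"
  by (rule pair_eqI) (simp add: pair_dual_phi pair_coad_left phi_br)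

lemma coad_dual_phi_phi [simp]: "coad br phi x (dual_map phi (dual_map phi b)) = coad br phi x b"
  by (rule pair_eqI) (simp add: pair_coad_left pair_dual_phi phi_br)

lemma coad_representation:
  "(\<lambda>j. coad br phi (phi x) (coad br phi y c) j - coad br phi (phi y) (coad br phi x c) j
     - coad br phi (br x y) (dual_map phi c) j) = (\<lambda>j. 0)"
proof (rule pair_eqI)
  fix z
  have jacobi: "br (phi y) (br x z) = (\<lambda>i. br (phi x) (br y z) i - br (br x y) (phi z) i)"
  proof (rule ext)
    fix i
    have "br (phi z) (br x y) i = - br (br x y) (phi z) i"
      by (subst skew) simp
    moreover have "br (phi y) (br z x) i = - br (phi y) (br x z) i"
      by (simp add: skew[of z x] lin_uminus[OF lin_right])
    ultimately show "br (phi y) (br x z) i = br (phi x) (br y z) i - br (br x y) (phi z) i"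
      using hom_jacobi[of x y z i] by (simp add: algebra_simps)
  qed
  show "pair (\<lambda>j. coad br phi (phi x) (coad br phi y c) j - coad br phi (phi y) (coad br phi x c) j
     - coad br phi (br x y) (dual_map phi c) j) z = pair (\<lambda>j. 0) z"
    by (simp add: pair_linear pair_coad_left pair_dual_phi phi_br jacobi)
qed

end

lemma wi_hom_lie_uminus:
  assumes "wi_hom_lie br phi"
  shows "wi_hom_lie (\<lambda>x y i. - br x y i) phi"
proof -
  interpret wi_hom_lie br phi by fact
  have "bilin (\<lambda>x y i. - br x y i)"
    by (simp add: bilin_def lin_def lin_add[OF lin_right] lin_scale[OF lin_right]
        lin_add[OF lin_left] lin_scale[OF lin_left])
  moreover have "(\<lambda>i. - br x y i) = (\<lambda>i. - (- br y x i))" for x y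
    by (subst skew) simp
  moreover have "phi (\<lambda>i. - br x y i) = (\<lambda>i. - br (phi x) (phi y) i)" for x y
    by (simp add: lin_uminus[OF lin_phi] phi_br)
  moreover have "(\<lambda>i. - br (phi x) (\<lambda>i. - br y z i) i + - br (phi y) (\<lambda>i. - br z x i) i
      + - br (phi z) (\<lambda>i. - br x y i) i) = (\<lambda>i. 0)" for x y z
    by (simp add: lin_uminus[OF lin_right] hom_jacobi)
  moreover have "(\<lambda>i. - br (phi (phi x)) y i) = (\<lambda>i. - br x y i)" for x y
    by simp
  ultimately show ?thesis
    unfolding wi_hom_lie_def hom_lie_def weak_inv_def using lin_phi by blast
qed

lemma gpart_mkd [simp]: "gpart (mkd x a) = x"
  and dpart_mkd [simp]: "dpart (mkd x a) = a"
  and mkd_Inl [simp]: "mkd x a (Inl i) = x i"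
  and mkd_Inr [simp]: "mkd x a (Inr i) = a i"
  by (simp_all add: gpart_def dpart_def mkd_def)

lemma mkd_parts [simp]: "mkd (gpart u) (dpart u) = u"
  by (rule ext) (simp add: mkd_def gpart_def dpart_def split: sum.split)

lemma mkd_add: "(\<lambda>s. mkd x a s + mkd y b s) = mkd (\<lambda>i. x i + y i) (\<lambda>i. a i + b i)"
  and mkd_add3: "(\<lambda>s. mkd x a s + mkd y b s + mkd z c s) = mkd (\<lambda>i. x i + y i + z i) (\<lambda>i. a i + b i + c i)"
  and mkd_scale: "(\<lambda>s. r * mkd x a s) = mkd (\<lambda>i. r * x i) (\<lambda>i. r * a i)"
  and mkd_zero: "(\<lambda>s. 0) = mkd (\<lambda>i. 0) (\<lambda>i. 0)"
  by (rule ext, simp add: mkd_def split: sum.split)+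

lemma gpart_add [simp]: "gpart (\<lambda>s. u s + v s) = (\<lambda>i. gpart u i + gpart v i)"
  and dpart_add [simp]: "dpart (\<lambda>s. u s + v s) = (\<lambda>i. dpart u i + dpart v i)"
  and gpart_scale [simp]: "gpart (\<lambda>s. c * u s) = (\<lambda>i. c * gpart u i)"
  and dpart_scale [simp]: "dpart (\<lambda>s. c * u s) = (\<lambda>i. c * dpart u i)"
  by (simp_all add: gpart_def dpart_def)

lemma mkd_split: "(\<lambda>s. mkd (gpart u) (\<lambda>i. 0) s + mkd (\<lambda>i. 0) (dpart u) s) = (u :: _ \<Rightarrow> 'k::monoid_add)"
  by (rule ext) (simp add: mkd_def gpart_def dpart_def split: sum.split)

lemma unitv_Inl: "unitv (Inl i) = mkd (unitv i) (\<lambda>j. 0)"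
  and unitv_Inr: "unitv (Inr i) = mkd (\<lambda>j. 0) (unitv i)"
  by (rule ext, simp add: unitv_def mkd_def split: sum.split)+

lemma pair_mkd: "pair u (mkd y b) = pair (gpart u) y + pair (dpart u) b"
  by (simp add: pair_def sum_UNIV_Plus gpart_def dpart_def)

definition sum_br :: "(('i \<Rightarrow> 'k) \<Rightarrow> ('i \<Rightarrow> 'k) \<Rightarrow> ('i \<Rightarrow> 'k)) \<Rightarrow> (('i \<Rightarrow> 'k) \<Rightarrow> ('i \<Rightarrow> 'k) \<Rightarrow> ('i \<Rightarrow> 'k))
    \<Rightarrow> ('i + 'i \<Rightarrow> 'k) \<Rightarrow> ('i + 'i \<Rightarrow> 'k) \<Rightarrow> ('i + 'i \<Rightarrow> 'k)" where
  "sum_br br1 br2 u v = mkd (br1 (gpart u) (gpart v)) (br2 (dpart u) (dpart v))"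

definition sum_phi :: "(('i \<Rightarrow> 'k) \<Rightarrow> ('i \<Rightarrow> 'k)) \<Rightarrow> (('i \<Rightarrow> 'k) \<Rightarrow> ('i \<Rightarrow> 'k))
    \<Rightarrow> ('i + 'i \<Rightarrow> 'k) \<Rightarrow> ('i + 'i \<Rightarrow> 'k)" where
  "sum_phi phi1 phi2 u = mkd (phi1 (gpart u)) (phi2 (dpart u))"

lemma wi_hom_lie_sum:
  assumes "wi_hom_lie br1 phi1" "wi_hom_lie br2 phi2"
  shows "wi_hom_lie (sum_br br1 br2) (sum_phi phi1 phi2)"
proof -
  interpret A: wi_hom_lie br1 phi1 by fact
  interpret B: wi_hom_lie br2 phi2 by fact
  have "bilin (sum_br br1 br2)"
    by (simp add: bilin_def lin_def sum_br_def mkd_add mkd_scale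
        lin_add[OF A.lin_right] lin_add[OF A.lin_left] lin_scale[OF A.lin_right] lin_scale[OF A.lin_left]
        lin_add[OF B.lin_right] lin_add[OF B.lin_left] lin_scale[OF B.lin_right] lin_scale[OF B.lin_left])
  moreover have "lin (sum_phi phi1 phi2)"
    by (simp add: lin_def sum_phi_def mkd_add mkd_scale lin_add[OF A.lin_phi] lin_add[OF B.lin_phi]
        lin_scale[OF A.lin_phi] lin_scale[OF B.lin_phi])
  moreover have "sum_br br1 br2 x y = (\<lambda>i. - sum_br br1 br2 y x i)" for x y
    by (rule ext) (simp add: sum_br_def mkd_def split: sum.split, metis A.skew B.skew)
  moreover have "(\<lambda>i. sum_br br1 br2 (sum_phi phi1 phi2 x) (sum_br br1 br2 y z) i
      + sum_br br1 br2 (sum_phi phi1 phi2 y) (sum_br br1 br2 z x) i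
      + sum_br br1 br2 (sum_phi phi1 phi2 z) (sum_br br1 br2 x y) i) = (\<lambda>i. 0)" for x y z
    by (simp add: sum_phi_def sum_br_def mkd_add3 A.hom_jacobi B.hom_jacobi mkd_zero)
  moreover have "sum_phi phi1 phi2 (sum_br br1 br2 x y)
      = sum_br br1 br2 (sum_phi phi1 phi2 x) (sum_phi phi1 phi2 y)" for x y
    by (simp add: sum_phi_def sum_br_def A.phi_br B.phi_br)
  moreover have "sum_br br1 br2 (sum_phi phi1 phi2 (sum_phi phi1 phi2 x)) y = sum_br br1 br2 x y" for x y
    by (simp add: sum_phi_def sum_br_def)
  ultimately show ?thesis
    unfolding wi_hom_lie_def hom_lie_def weak_inv_def by blast
qed

definition hom_jacobiator ::
    "(('j \<Rightarrow> 'k::field) \<Rightarrow> ('j \<Rightarrow> 'k) \<Rightarrow> ('j \<Rightarrow> 'k)) \<Rightarrow> (('j \<Rightarrow> 'k) \<Rightarrow> ('j \<Rightarrow> 'k))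
       \<Rightarrow> ('j \<Rightarrow> 'k) \<Rightarrow> ('j \<Rightarrow> 'k) \<Rightarrow> ('j \<Rightarrow> 'k) \<Rightarrow> ('j \<Rightarrow> 'k)" where
  "hom_jacobiator br phi u v w = (\<lambda>s. br (phi u) (br v w) s + br (phi v) (br w u) s + br (phi w) (br u v) s)"

lemma hom_jacobiator_cyclic: "hom_jacobiator br phi u v w = hom_jacobiator br phi v w u"
  and hom_jacobiator_cyclic': "hom_jacobiator br phi u v w = hom_jacobiator br phi w u v"
  by (simp_all add: hom_jacobiator_def algebra_simps)

lemma hom_jacobiator_add:
  assumes "bilin br" "lin phi"
  shows "hom_jacobiator br phi (\<lambda>s. u1 s + u2 s) v w
      = (\<lambda>s. hom_jacobiator br phi u1 v w s + hom_jacobiator br phi u2 v w s)"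
    and "hom_jacobiator br phi u (\<lambda>s. v1 s + v2 s) w
      = (\<lambda>s. hom_jacobiator br phi u v1 w s + hom_jacobiator br phi u v2 w s)"
    and "hom_jacobiator br phi u v (\<lambda>s. w1 s + w2 s)
      = (\<lambda>s. hom_jacobiator br phi u v w1 s + hom_jacobiator br phi u v w2 s)"
  by (simp_all add: hom_jacobiator_def lin_add[OF assms(2)] lin_add[OF bilin_lin_left[OF assms(1)]]
      lin_add[OF bilin_lin_right[OF assms(1)]] algebra_simps)

lemma tmap_rcan:
  "tmap f g (rcan::('i::finite + 'i \<Rightarrow> 'i + 'i \<Rightarrow> 'k::field)) s t
     = (\<Sum>i\<in>UNIV. f (unitv (Inl i)) s * g (unitv (Inr i)) t)"
  by (simp add: tmap_def sum_UNIV_Plus rcan_def mult.assoc if_distrib[of "\<lambda>z. z * _"] cong: if_cong)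

section \<open>The double of a Hom-Lie bialgebra\<close>

locale hom_lie_bialgebra =
  fixes br :: "('i::finite \<Rightarrow> 'k::field) \<Rightarrow> ('i \<Rightarrow> 'k) \<Rightarrow> ('i \<Rightarrow> 'k)"
    and phi :: "('i \<Rightarrow> 'k) \<Rightarrow> ('i \<Rightarrow> 'k)"
    and D :: "('i \<Rightarrow> 'k) \<Rightarrow> ('i \<Rightarrow> 'i \<Rightarrow> 'k)"
  assumes hom_lie_bialg: "hom_lie_bialg br phi D"
begin

sublocale g: wi_hom_lie br phi
  using hom_lie_bialg by (simp add: hom_lie_bialg_def wi_hom_lie_def)

sublocale d: wi_hom_lie "dual_br D" "dual_map phi"
  using hom_lie_bialg by (simp add: hom_lie_bialg_def wi_hom_lie_def)

abbreviation "psi \<equiv> dual_map phi"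
abbreviation "cg \<equiv> coad br phi"
abbreviation "cd \<equiv> coad (dual_br D) psi"
abbreviation "B \<equiv> dbr br phi D"
abbreviation "P \<equiv> dphi phi"

lemma lin2_D: "lin2 D"
  using hom_lie_bialg by (simp add: hom_lie_bialg_def)

lemma cobracket_cocycle: "D (br x y) = (\<lambda>i j. ad_t br phi (phi x) (D y) i j - ad_t br phi (phi y) (D x) i j)"
  using hom_lie_bialg by (simp add: hom_lie_bialg_def)

lemma psi_psi [simp]: "dual_map psi = phi"
  using dual_map_dual_map[OF g.lin_phi] .

lemma psi_column: "(\<lambda>p. psi (unitv p) k) = phi (unitv k)"
  by (rule ext) (simp add: dual_map_def)

lemma pair_dual_br_D: "pair (dual_br D a b) x = tpair (D x) a b"
  using pair_dual_br[OF lin2_D] .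

lemma pair_dual_br_cocycle:
  "pair (dual_br D c b) (br x y) =
     - pair (dual_br D (cg x c) (psi b)) y - pair (dual_br D (psi c) (cg x b)) y
     + pair (dual_br D (cg y c) (psi b)) x + pair (dual_br D (psi c) (cg y b)) x"
  by (simp add: pair_dual_br_D cobracket_cocycle tpair_diff tpair_ad_t g.dual_map_br_phi
      tpair_uminus_left tpair_uminus_right)

lemma dbr_mkd: "B (mkd x a) (mkd y b) = mkd (\<lambda>i. br x y i + cd a y i - cd b x i)
    (\<lambda>i. cg x b i - cg y a i + dual_br D a b i)"
  by (simp add: dbr_def Let_def)

lemma dbr_parts: "B u v = mkd
    (\<lambda>i. br (gpart u) (gpart v) i + cd (dpart u) (gpart v) i - cd (dpart v) (gpart u) i)
    (\<lambda>i. cg (gpart u) (dpart v) i - cg (gpart v) (dpart u) i + dual_br D (dpart u) (dpart v) i)"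
  by (simp add: dbr_def Let_def)

lemma dphi_mkd: "P (mkd x a) = mkd (phi x) (psi a)"
  by (simp add: dphi_def)

lemmas lin_rules =
  lin_add[OF g.lin_right] lin_add[OF g.lin_left] lin_scale[OF g.lin_right] lin_scale[OF g.lin_left]
  lin_add[OF d.lin_right] lin_add[OF d.lin_left] lin_scale[OF d.lin_right] lin_scale[OF d.lin_left]
  lin_add[OF g.lin_coad] lin_add[OF g.lin_coad_left] lin_scale[OF g.lin_coad] lin_scale[OF g.lin_coad_left]
  lin_add[OF d.lin_coad] lin_add[OF d.lin_coad_left] lin_scale[OF d.lin_coad] lin_scale[OF d.lin_coad_left]
  lin_add[OF g.lin_phi] lin_scale[OF g.lin_phi] lin_add[OF d.lin_phi] lin_scale[OF d.lin_phi]

lemmas uminus_rules =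
  lin_uminus[OF g.lin_right] lin_uminus[OF g.lin_left] lin_uminus[OF d.lin_right] lin_uminus[OF d.lin_left]
  lin_uminus[OF g.lin_coad] lin_uminus[OF g.lin_coad_left] lin_uminus[OF d.lin_coad]
  lin_uminus[OF d.lin_coad_left] lin_uminus[OF g.lin_phi] lin_uminus[OF d.lin_phi]

lemma bilin_dbr: "bilin B"
  unfolding bilin_def lin_def by (simp add: dbr_parts lin_rules mkd_add mkd_scale algebra_simps)

lemma lin_dphi: "lin P"
  unfolding lin_def dphi_def by (simp add: lin_rules mkd_add mkd_scale)

lemma dbr_skew: "B u v = (\<lambda>s. - B v u s)"
  by (rule ext) (simp add: dbr_parts mkd_def g.skew[of "gpart u"] d.skew[of "dpart u"] split: sum.split)

lemma dphi_dbr: "P (B u v) = B (P u) (P v)"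
proof -
  have "P (B (mkd x a) (mkd y b)) = B (P (mkd x a)) (P (mkd y b))" for x a y b
    using d.dual_phi_coad[of a y] d.dual_phi_coad[of b x]
    by (simp add: dbr_mkd dphi_mkd lin_rules lin_diff[OF g.lin_phi] lin_diff[OF d.lin_phi]
        g.dual_phi_coad g.phi_br d.phi_br)
  from this[of "gpart u" "dpart u" "gpart v" "dpart v"] show ?thesis by simp
qed

lemma dbr_dphi_dphi_left [simp]: "B (P (P u)) v = B u v"
proof -
  have "B (P (P (mkd x a))) (mkd y b) = B (mkd x a) (mkd y b)" for x a y b
    using d.coad_dual_phi_phi[of b x] by (simp add: dbr_mkd dphi_mkd)
  from this[of "gpart u" "dpart u" "gpart v" "dpart v"] show ?thesis by simp
qed

lemma dbr_dphi_dphi_right [simp]: "B u (P (P v)) = B u v"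
  by (subst (1 2) dbr_skew) simp

lemma pair_br_coad_dual: "pair b (br (phi x) (cd c y)) = pair (dual_br D (psi c) (cg x b)) y"
  using g.pair_coad_left[of x b "cd c y"] d.pair_coad_right[of "cg x b" c y] pair_commute
  by (metis minus_equation_iff)

lemma pair_coad_dual_phi: "pair b (cd a (phi x)) = - pair (dual_br D a (psi b)) x"
proof -
  have "pair b (cd a (phi x)) = - pair (psi (dual_br D (psi a) b)) x"
    using d.pair_coad_right[of b a "phi x"] by (simp add: pair_commute[of "phi x"] g.pair_dual_phi)
  then show ?thesis by (simp add: d.phi_br)
qed

lemma pair_coad_dual_psi: "pair b (cd (psi c) z) = - pair (dual_br D c b) z"
  using d.pair_coad_right[of b "psi c" z] by (simp add: pair_commute)

lemma pair_coad_coad_dual: "pair (cg (cd c x) (psi b)) y = pair (dual_br D (psi c) (cg y b)) x"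
proof -
  have "pair (cg (cd c x) (psi b)) y = - pair b (br (cd c x) (phi y))"
    by (simp add: g.pair_coad_left g.pair_dual_phi g.phi_br)
  also have "\<dots> = pair b (br (phi y) (cd c x))"
    by (subst g.skew) (simp add: pair_uminus_right)
  also have "\<dots> = pair (dual_br D (psi c) (cg y b)) x"
    by (rule pair_br_coad_dual)
  finally show ?thesis .
qed

abbreviation "J \<equiv> hom_jacobiator B P"

lemma hom_jacobiator_g_g_g: "J (mkd x (\<lambda>i. 0)) (mkd y (\<lambda>i. 0)) (mkd z (\<lambda>i. 0)) = (\<lambda>s. 0)"
proof -
  have "(\<lambda>i. br (phi x) (br y z) i + br (phi y) (br z x) i + br (phi z) (br x y) i) = (\<lambda>i. 0)"
    using g.hom_jacobi by auto
  then show ?thesis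
    by (simp add: hom_jacobiator_def dbr_mkd dphi_mkd mkd_add3 mkd_zero)
qed

lemma hom_jacobiator_d_d_d: "J (mkd (\<lambda>i. 0) a) (mkd (\<lambda>i. 0) b) (mkd (\<lambda>i. 0) c) = (\<lambda>s. 0)"
proof -
  have "(\<lambda>i. dual_br D (psi a) (dual_br D b c) i + dual_br D (psi b) (dual_br D c a) i
      + dual_br D (psi c) (dual_br D a b) i) = (\<lambda>i. 0)"
    using d.hom_jacobi by auto
  then show ?thesis
    by (simp add: hom_jacobiator_def dbr_mkd dphi_mkd mkd_add3 mkd_zero)
qed

text \<open>With two arguments in \<open>\<g>\<close> and one in \<open>\<g>\<^sup>*\<close>, the \<open>\<g>\<^sup>*\<close>-component of the Jacobiator vanishes
because the coadjoint action of \<open>\<g>\<close> is a representation, and the \<open>\<g>\<close>-component, paired with a test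
vector, is the compatibility of \<open>\<Delta>\<close> with the bracket; symmetrically with one argument in \<open>\<g>\<close>.\<close>

lemma hom_jacobiator_g_g_d: "J (mkd x (\<lambda>i. 0)) (mkd y (\<lambda>i. 0)) (mkd (\<lambda>i. 0) c) = (\<lambda>s. 0)"
proof -
  have "(\<lambda>i. (- br (phi x) (cd c y) i - cd (cg y c) (phi x) i) + (br (phi y) (cd c x) i
      + cd (cg x c) (phi y) i) + cd (psi c) (br x y) i) = (\<lambda>i. 0)"
  proof (rule pair_eqI)
    fix b
    show "pair (\<lambda>i. (- br (phi x) (cd c y) i - cd (cg y c) (phi x) i) + (br (phi y) (cd c x) i
        + cd (cg x c) (phi y) i) + cd (psi c) (br x y) i) b = pair (\<lambda>i. 0) b"
      by (simp add: pair_commute[where x = b] pair_linear pair_br_coad_dual pair_coad_dual_phi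
          pair_coad_dual_psi pair_dual_br_cocycle d.skew[of "cg x c"] d.skew[of "cg y c"])
  qed
  then show ?thesis
    using g.coad_representation[of x y c]
    by (simp add: hom_jacobiator_def dbr_mkd dphi_mkd uminus_rules mkd_add3 mkd_zero)
qed

lemma hom_jacobiator_g_d_d: "J (mkd x (\<lambda>i. 0)) (mkd (\<lambda>i. 0) b) (mkd (\<lambda>i. 0) c) = (\<lambda>s. 0)"
proof -
  have "(\<lambda>i. cg (phi x) (dual_br D b c) i - cg (cd c x) (psi b) i - dual_br D (psi b) (cg x c) i
      + cg (cd b x) (psi c) i + dual_br D (psi c) (cg x b) i) = (\<lambda>i. 0)"
    by (rule pair_eqI) (simp add: pair_linear pair_coad_coad_dual g.pair_coad_phi pair_dual_br_cocycle
        d.skew[of "cg t b" for t])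
  then have "(\<lambda>i. cg (phi x) (dual_br D b c) i + (- cg (cd c x) (psi b) i - dual_br D (psi b) (cg x c) i)
      + (cg (cd b x) (psi c) i + dual_br D (psi c) (cg x b) i)) = (\<lambda>i. 0)"
    by (simp add: algebra_simps)
  moreover have "(\<lambda>i. cd (psi b) (cd c x) i - cd (dual_br D b c) (phi x) i - cd (psi c) (cd b x) i)
      = (\<lambda>i. 0)"
    using d.coad_representation[of b c x] by (simp add: algebra_simps)
  ultimately show ?thesis
    by (simp add: hom_jacobiator_def dbr_mkd dphi_mkd uminus_rules mkd_add3 mkd_zero)
qed

lemma double_hom_jacobi: "J u v w = (\<lambda>s. 0)"
proof -
  have "J u v w = J (\<lambda>s. mkd (gpart u) (\<lambda>i. 0) s + mkd (\<lambda>i. 0) (dpart u) s)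
      (\<lambda>s. mkd (gpart v) (\<lambda>i. 0) s + mkd (\<lambda>i. 0) (dpart v) s)
      (\<lambda>s. mkd (gpart w) (\<lambda>i. 0) s + mkd (\<lambda>i. 0) (dpart w) s)"
    by (simp only: mkd_split)
  also have "\<dots> = (\<lambda>s. 0)"
    by (simp only: hom_jacobiator_add[OF bilin_dbr lin_dphi] hom_jacobiator_g_g_g hom_jacobiator_g_g_d
        hom_jacobiator_g_d_d hom_jacobiator_d_d_d
        hom_jacobiator_cyclic'[of B P "mkd x (\<lambda>i. 0)" "mkd (\<lambda>i. 0) b" "mkd z (\<lambda>i. 0)" for x b z]
        hom_jacobiator_cyclic[of B P "mkd (\<lambda>i. 0) a" "mkd y (\<lambda>i. 0)" "mkd z (\<lambda>i. 0)" for a y z]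
        hom_jacobiator_cyclic[of B P "mkd (\<lambda>i. 0) a" "mkd y (\<lambda>i. 0)" "mkd (\<lambda>i. 0) c" for a y c]
        hom_jacobiator_cyclic'[of B P "mkd (\<lambda>i. 0) a" "mkd (\<lambda>i. 0) b" "mkd z (\<lambda>i. 0)" for a b z])
      simp
  finally show ?thesis .
qed

lemma dbr_unitv_Inl:
    "B (mkd x a) (unitv (Inl i)) = mkd (\<lambda>k. br x (unitv i) k + cd a (unitv i) k) (\<lambda>k. - cg (unitv i) a k)"
  and dbr_unitv_Inr:
    "B (mkd x a) (unitv (Inr i)) = mkd (\<lambda>k. - cd (unitv i) x k) (\<lambda>k. cg x (unitv i) k + dual_br D a (unitv i) k)"
  and dphi_unitv_Inl: "P (unitv (Inl i)) = mkd (phi (unitv i)) (\<lambda>k. 0)"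
  and dphi_unitv_Inr: "P (unitv (Inr i)) = mkd (\<lambda>k. 0) (psi (unitv i))"
  by (simp_all add: unitv_Inl unitv_Inr dbr_mkd dphi_mkd)

lemmas dcobr_unfold = dcobr_def ad_t_def tmap_rcan dbr_unitv_Inl dbr_unitv_Inr dphi_unitv_Inl dphi_unitv_Inr

lemma dcobr_Inl_Inl: "dcobr br phi D (mkd x a) (Inl k) (Inl l) = D x k l"
proof -
  have "dcobr br phi D (mkd x a) (Inl k) (Inl l) = - (\<Sum>i\<in>UNIV. psi (unitv k) i * cd (unitv i) x l)"
    by (simp add: dcobr_unfold sum_negf)
  also have "\<dots> = - cd (psi (unitv k)) x l"
    by (simp only: lin_expansion[OF d.lin_coad_left, symmetric])
  also have "\<dots> = D x k l"
    by (simp add: coad_def pair_commute[of x] pair_dual_br_D tpair_unitv)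
  finally show ?thesis .
qed

lemma dcobr_Inr_Inr: "dcobr br phi D (mkd x a) (Inr k) (Inr l) = - dual_cobr br a k l"
proof -
  have "dcobr br phi D (mkd x a) (Inr k) (Inr l) = - (\<Sum>i\<in>UNIV. phi (unitv l) i * cg (unitv i) a k)"
    by (simp add: dcobr_unfold sum_negf mult.commute)
  also have "\<dots> = - cg (phi (unitv l)) a k"
    by (simp only: lin_expansion[OF g.lin_coad_left, symmetric])
  also have "\<dots> = pair a (br (unitv l) (unitv k))"
    by (simp add: coad_def)
  also have "\<dots> = - dual_cobr br a k l"
    by (subst g.skew) (simp add: dual_cobr_def pair_uminus_right)
  finally show ?thesis .
qed

lemma dcobr_Inr_Inl: "dcobr br phi D (mkd x a) (Inr k) (Inl l) = 0"
  by (simp add: dcobr_unfold)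

text \<open>In the \<open>(\<g>, \<g>\<^sup>*)\<close> block the four contributions cancel in pairs, by the invariance of the
pairing under the twisting maps.\<close>

lemma dcobr_Inl_Inr: "dcobr br phi D (mkd x a) (Inl k) (Inr l) = 0"
proof -
  have "dcobr br phi D (mkd x a) (Inl k) (Inr l) =
     (\<Sum>i\<in>UNIV. phi (unitv l) i * br x (unitv i) k) + (\<Sum>i\<in>UNIV. phi (unitv l) i * cd a (unitv i) k)
   + (\<Sum>i\<in>UNIV. psi (unitv k) i * cg x (unitv i) l) + (\<Sum>i\<in>UNIV. psi (unitv k) i * dual_br D a (unitv i) l)"
    by (simp add: dcobr_unfold sum.distrib algebra_simps)
  also have "\<dots> = br x (phi (unitv l)) k + cd a (phi (unitv l)) k + cg x (psi (unitv k)) l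
      + dual_br D a (psi (unitv k)) l"
    by (simp only: lin_expansion[OF g.lin_right, symmetric] lin_expansion[OF d.lin_right, symmetric]
        lin_expansion[OF g.lin_coad, symmetric] lin_expansion[OF d.lin_coad, symmetric])
  also have "cg x (psi (unitv k)) l = - br x (phi (unitv l)) k"
    by (simp add: coad_def g.pair_dual_phi g.phi_br del: dual_map_unitv)
  also have "cd a (phi (unitv l)) k = - dual_br D a (psi (unitv k)) l"
    using pair_coad_dual_phi[of "unitv k" a "unitv l"] by (simp add: d.phi_br del: dual_map_unitv)
  finally show ?thesis by (simp del: dual_map_unitv)
qed

lemma dcobr_blocks:
  "dcobr br phi D u s t = (case (s, t) of
      (Inl k, Inl l) \<Rightarrow> D (gpart u) k l
    | (Inr k, Inr l) \<Rightarrow> - dual_cobr br (dpart u) k l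
    | _ \<Rightarrow> 0)"
  using dcobr_Inl_Inl[of "gpart u" "dpart u"] dcobr_Inr_Inr[of "gpart u" "dpart u"]
    dcobr_Inl_Inr[of "gpart u" "dpart u"] dcobr_Inr_Inl[of "gpart u" "dpart u"]
  by (simp split: sum.split)

lemma dual_br_dcobr: "dual_br (dcobr br phi D) = sum_br (dual_br D) (\<lambda>x y i. - br x y i)"
proof (intro ext)
  fix \<alpha> \<beta> :: "'i + 'i \<Rightarrow> 'k" and s
  show "dual_br (dcobr br phi D) \<alpha> \<beta> s = sum_br (dual_br D) (\<lambda>x y i. - br x y i) \<alpha> \<beta> s"
  proof (cases s)
    case (Inl k)
    then show ?thesis
      by (simp add: dual_br_def sum_UNIV_Plus unitv_Inl dcobr_blocks dual_cobr_def sum_br_def gpart_def)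
  next
    case (Inr k)
    have "dual_br (dcobr br phi D) \<alpha> \<beta> (Inr k)
        = - (\<Sum>i\<in>UNIV. \<Sum>j\<in>UNIV. dpart \<alpha> i * dpart \<beta> j * br (unitv i) (unitv j) k)"
      by (simp add: dual_br_def dcobr_blocks sum_UNIV_Plus unitv_Inr dual_cobr_def dpart_def
          lin2_zero[OF lin2_D] sum_negf mult_ac)
    also have "\<dots> = - br (dpart \<alpha>) (dpart \<beta>) k"
      by (simp only: bilin_expansion[OF g.bilin, symmetric])
    finally show ?thesis
      using Inr by (simp add: sum_br_def)
  qed
qed

lemma dual_map_dphi: "dual_map P = sum_phi psi phi"
proof (intro ext)
  fix \<alpha> :: "'i + 'i \<Rightarrow> 'k" and s
  show "dual_map P \<alpha> s = sum_phi psi phi \<alpha> s"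
  proof (cases s)
    case (Inl k)
    then show ?thesis
      by (simp only: dual_map_def unitv_Inl dphi_mkd pair_mkd sum_phi_def mkd_Inl) simp
  next
    case (Inr k)
    have "dual_map P \<alpha> (Inr k) = pair (psi (unitv k)) (dpart \<alpha>)"
      by (simp only: dual_map_def unitv_Inr dphi_mkd pair_mkd g.phi_zero pair_zero_right add_0_left
          pair_commute[of "dpart \<alpha>"])
    also have "\<dots> = phi (dpart \<alpha>) k"
      by (simp add: g.pair_dual_phi del: dual_map_unitv)
    finally show ?thesis
      using Inr by (simp add: sum_phi_def)
  qed
qed

lemma wi_hom_lie_dual_double: "wi_hom_lie (dual_br (dcobr br phi D)) (dual_map P)"
  unfolding dual_br_dcobr dual_map_dphi
  by (rule wi_hom_lie_sum[OF d.wi_hom_lie_axioms wi_hom_lie_uminus[OF g.wi_hom_lie_axioms]])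

lemma lin2_dcobr: "lin2 (dcobr br phi D)"
proof -
  have "D (\<lambda>i. x i + y i) = (\<lambda>p q. D x p q + D y p q)" "D (\<lambda>i. c * x i) = (\<lambda>p q. c * D x p q)" for c x y
    using lin2_D by (simp_all add: lin2_def)
  then show ?thesis
    unfolding lin2_def
    by (intro conjI allI ext) (auto simp: dcobr_blocks dual_cobr_def pair_add_left pair_scale_left split: sum.split)
qed

lemma bialg_hom_inj_g: "bialg_hom br phi D B P (dcobr br phi D) (inj_g phi)"
proof -
  have "tmap (inj_g phi) (inj_g phi) (D x) (Inl k) (Inl l) = D (phi x) k l" for x k l
  proof -
    have "tmap (inj_g phi) (inj_g phi) (D x) (Inl k) (Inl l) = tpair (D x) (psi (unitv k)) (psi (unitv l))"
      by (simp add: tmap_as_tpair inj_g_def dual_map_def)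
    also have "\<dots> = pair (psi (dual_br D (unitv k) (unitv l))) x"
      by (simp add: pair_dual_br_D d.phi_br del: dual_map_unitv)
    also have "\<dots> = D (phi x) k l"
      by (simp add: g.pair_dual_phi pair_dual_br_D tpair_unitv del: dual_map_unitv)
    finally show ?thesis .
  qed
  then have "tmap (inj_g phi) (inj_g phi) (D x) = dcobr br phi D (inj_g phi x)" for x
    by (intro ext) (auto simp: tmap_as_tpair inj_g_def tpair_zero_left tpair_zero_right dcobr_blocks
        dual_cobr_def split: sum.split)
  moreover have "lin (inj_g phi)"
    by (simp add: lin_def inj_g_def lin_add[OF g.lin_phi] lin_scale[OF g.lin_phi] mkd_add mkd_scale)
  ultimately show ?thesis
    unfolding bialg_hom_def by (simp add: inj_g_def dbr_mkd dphi_mkd g.phi_br)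
qed

lemma bialg_hom_inj_d:
  "bialg_hom (dual_br D) psi (\<lambda>a i j. - dual_cobr br a i j) B P (dcobr br phi D) (inj_d phi)"
proof -
  have "tmap (inj_d phi) (inj_d phi) (\<lambda>i j. - dual_cobr br a i j) (Inr k) (Inr l)
      = - dual_cobr br (psi a) k l" for a k l
  proof -
    have "tmap (inj_d phi) (inj_d phi) (\<lambda>i j. - dual_cobr br a i j) (Inr k) (Inr l)
        = - tpair (dual_cobr br a) (phi (unitv k)) (phi (unitv l))"
      by (simp add: tmap_as_tpair inj_d_def tpair_uminus psi_column del: dual_map_unitv)
    also have "\<dots> = - pair a (phi (br (unitv k) (unitv l)))"
      by (simp add: tpair_dual_cobr[OF g.bilin] g.phi_br)
    also have "\<dots> = - dual_cobr br (psi a) k l"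
      by (simp add: g.pair_dual_phi[symmetric] dual_cobr_def del: dual_map_unitv)
    finally show ?thesis .
  qed
  then have "tmap (inj_d phi) (inj_d phi) (\<lambda>i j. - dual_cobr br a i j) = dcobr br phi D (inj_d phi a)" for a
    by (intro ext) (auto simp: tmap_as_tpair inj_d_def tpair_zero_left tpair_zero_right dcobr_blocks
        lin2_zero[OF lin2_D] split: sum.split)
  moreover have "lin (inj_d phi)"
    by (simp add: lin_def inj_d_def lin_add[OF d.lin_phi] lin_scale[OF d.lin_phi] mkd_add mkd_scale)
  ultimately show ?thesis
    unfolding bialg_hom_def by (simp add: inj_d_def dbr_mkd dphi_mkd d.phi_br)
qed

text \<open>\<open>(\<phi> \<otimes> \<phi>) r\<close> may be computed by moving both twists to either side: this is the
invariance of \<open>r\<close> that the coboundary needs, and it rests on \<open>\<phi>\<^sup>*\<close> being the transpose of \<open>\<phi>\<close>.\<close>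

lemma tmap_dphi_rcan_left: "tmap P P rcan = tmap (\<lambda>v. P (P v)) (\<lambda>v. v) rcan"
proof (intro ext)
  fix s t :: "'i + 'i"
  show "tmap P P rcan s t = tmap (\<lambda>v. P (P v)) (\<lambda>v. v) rcan s t"
  proof (cases s; cases t)
    fix k l assume st: "s = Inl k" "t = Inr l"
    have "tmap P P rcan s t = (\<Sum>i\<in>UNIV. phi (unitv l) i * phi (unitv i) k)"
      by (simp add: st tmap_rcan dphi_unitv_Inl dphi_unitv_Inr mult.commute)
    also have "\<dots> = phi (phi (unitv l)) k"
      by (rule lin_expansion[OF g.lin_phi, symmetric])
    finally show ?thesis
      by (simp add: st tmap_rcan unitv_Inl unitv_Inr dphi_mkd)
  qed (simp_all add: tmap_rcan dphi_unitv_Inl dphi_unitv_Inr unitv_Inl unitv_Inr dphi_mkd)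
qed

lemma tmap_dphi_rcan_right: "tmap P P rcan = tmap (\<lambda>v. v) (\<lambda>v. P (P v)) rcan"
proof (intro ext)
  fix s t :: "'i + 'i"
  show "tmap P P rcan s t = tmap (\<lambda>v. v) (\<lambda>v. P (P v)) rcan s t"
  proof (cases s; cases t)
    fix k l assume st: "s = Inl k" "t = Inr l"
    have "tmap P P rcan s t = (\<Sum>i\<in>UNIV. phi (unitv l) i * phi (unitv i) k)"
      by (simp add: st tmap_rcan dphi_unitv_Inl dphi_unitv_Inr mult.commute)
    also have "\<dots> = pair (unitv k) (phi (phi (unitv l)))"
      by (simp add: lin_expansion[OF g.lin_phi, of "phi (unitv l)" k])
    also have "\<dots> = pair (psi (unitv k)) (phi (unitv l))"
      by (rule g.pair_dual_phi[symmetric])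
    also have "\<dots> = psi (psi (unitv k)) l"
      by (simp only: dual_map_def[of phi "psi (unitv k)"])
    finally show ?thesis
      by (simp add: st tmap_rcan unitv_Inl unitv_Inr dphi_mkd del: dual_map_unitv)
  qed (simp_all add: tmap_rcan dphi_unitv_Inl dphi_unitv_Inr unitv_Inl unitv_Inr dphi_mkd)
qed

lemma dbr_jacobi: "B (P u) (B v y) s - B (P v) (B u y) s = B (B u v) (P y) s"
proof -
  have "B (P u) (B v y) s + B (P v) (B y u) s + B (P y) (B u v) s = 0"
    using fun_cong[OF double_hom_jacobi[of u v y], of s] by (simp add: hom_jacobiator_def)
  moreover have "B (P v) (B y u) s = - B (P v) (B u y) s"
    by (subst dbr_skew[of y u]) (simp add: lin_uminus[OF bilin_lin_right[OF bilin_dbr]])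
  moreover have "B (P y) (B u v) s = - B (B u v) (P y) s"
    by (subst dbr_skew) simp
  ultimately show ?thesis by (simp add: algebra_simps)
qed

lemma tmap_dbr_dcobr_left: "tmap (B (P u)) P (dcobr br phi D v) = (\<lambda>i j.
    tmap (\<lambda>y. B (P u) (B v y)) (\<lambda>y. P (P y)) rcan i j + tmap (\<lambda>y. B (P u) (P y)) (\<lambda>y. B (P v) (P y)) rcan i j)"
  by (simp add: dcobr_def ad_t_def tmap_add_tensor tmap_comp[OF bilin_lin_right[OF bilin_dbr] lin_dphi]
      dphi_dbr)

lemma tmap_dbr_dcobr_right: "tmap P (B (P u)) (dcobr br phi D v) = (\<lambda>i j.
    tmap (\<lambda>y. B (P v) (P y)) (\<lambda>y. B (P u) (P y)) rcan i j + tmap (\<lambda>y. P (P y)) (\<lambda>y. B (P u) (B v y)) rcan i j)"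
  by (simp add: dcobr_def ad_t_def tmap_add_tensor tmap_comp[OF lin_dphi bilin_lin_right[OF bilin_dbr]]
      dphi_dbr)

lemma tmap_dbr_jacobi_left:
  "tmap (\<lambda>y. B (P u) (B v y)) (\<lambda>y. P (P y)) rcan i j - tmap (\<lambda>y. B (P v) (B u y)) (\<lambda>y. P (P y)) rcan i j
     = tmap (B (B u v)) P rcan i j"
proof -
  have "tmap (\<lambda>y. B (P u) (B v y)) (\<lambda>y. P (P y)) rcan i j - tmap (\<lambda>y. B (P v) (B u y)) (\<lambda>y. P (P y)) rcan i j
      = tmap (\<lambda>y s. B (P u) (B v y) s - B (P v) (B u y) s) (\<lambda>y. P (P y)) rcan i j"
    by (simp add: tmap_diff_left)
  also have "\<dots> = tmap (B (B u v)) P (tmap P P rcan) i j"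
    by (simp add: dbr_jacobi tmap_comp[OF bilin_lin_right[OF bilin_dbr] lin_dphi])
  also have "\<dots> = tmap (B (B u v)) P rcan i j"
    by (simp add: tmap_dphi_rcan_left tmap_comp[OF bilin_lin_right[OF bilin_dbr] lin_dphi])
  finally show ?thesis .
qed

lemma tmap_dbr_jacobi_right:
  "tmap (\<lambda>y. P (P y)) (\<lambda>y. B (P u) (B v y)) rcan i j - tmap (\<lambda>y. P (P y)) (\<lambda>y. B (P v) (B u y)) rcan i j
     = tmap P (B (B u v)) rcan i j"
proof -
  have "tmap (\<lambda>y. P (P y)) (\<lambda>y. B (P u) (B v y)) rcan i j - tmap (\<lambda>y. P (P y)) (\<lambda>y. B (P v) (B u y)) rcan i j
      = tmap (\<lambda>y. P (P y)) (\<lambda>y s. B (P u) (B v y) s - B (P v) (B u y) s) rcan i j"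
    by (simp add: tmap_diff_right)
  also have "\<dots> = tmap P (B (B u v)) (tmap P P rcan) i j"
    by (simp add: dbr_jacobi tmap_comp[OF lin_dphi bilin_lin_right[OF bilin_dbr]])
  also have "\<dots> = tmap P (B (B u v)) rcan i j"
    by (simp add: tmap_dphi_rcan_right tmap_comp[OF lin_dphi bilin_lin_right[OF bilin_dbr]])
  finally show ?thesis .
qed

lemma dcobr_cocycle:
  "dcobr br phi D (B u v)
     = (\<lambda>i j. ad_t B P (P u) (dcobr br phi D v) i j - ad_t B P (P v) (dcobr br phi D u) i j)"
proof (intro ext)
  fix i j
  have "dcobr br phi D (B u v) i j = tmap (B (B u v)) P rcan i j + tmap P (B (B u v)) rcan i j"
    by (simp add: dcobr_def ad_t_def)
  then show "dcobr br phi D (B u v) i j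
      = ad_t B P (P u) (dcobr br phi D v) i j - ad_t B P (P v) (dcobr br phi D u) i j"
    using tmap_dbr_jacobi_left[of u v i j] tmap_dbr_jacobi_right[of u v i j]
    by (simp add: ad_t_def tmap_dbr_dcobr_left tmap_dbr_dcobr_right algebra_simps)
qed

end

theorem mainTheorem3:
  fixes br :: "('i::finite \<Rightarrow> 'k::field) \<Rightarrow> ('i \<Rightarrow> 'k) \<Rightarrow> ('i \<Rightarrow> 'k)"
    and phi :: "('i \<Rightarrow> 'k) \<Rightarrow> ('i \<Rightarrow> 'k)"
    and D :: "('i \<Rightarrow> 'k) \<Rightarrow> ('i \<Rightarrow> 'i \<Rightarrow> 'k)"
  assumes "hom_lie_bialg br phi D"
  shows "hom_lie_bialg (dbr br phi D) (dphi phi) (dcobr br phi D)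
       \<and> bialg_hom br phi D (dbr br phi D) (dphi phi) (dcobr br phi D) (inj_g phi)
       \<and> bialg_hom (dual_br D) (dual_map phi) (\<lambda>a i j. - dual_cobr br a i j)
                   (dbr br phi D) (dphi phi) (dcobr br phi D) (inj_d phi)"
proof -
  interpret hom_lie_bialgebra br phi D
    using assms by (rule hom_lie_bialgebra.intro)
  have "hom_lie (dbr br phi D) (dphi phi)"
    unfolding hom_lie_def
    using bilin_dbr dbr_skew lin_dphi dphi_dbr double_hom_jacobi[unfolded hom_jacobiator_def] by blast
  moreover have "weak_inv (dbr br phi D) (dphi phi)"
    by (simp add: weak_inv_def)
  moreover note wi_hom_lie_dual_double[unfolded wi_hom_lie_def]
  ultimately have "hom_lie_bialg (dbr br phi D) (dphi phi) (dcobr br phi D)"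
    unfolding hom_lie_bialg_def using lin2_dcobr dcobr_cocycle by blast
  then show ?thesis
    using bialg_hom_inj_g bialg_hom_inj_d by blast
qed

end
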